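(* Let $\Gamma$ be a finite simplicial graph satisfying (B1): for all non-adjacent $u,v\in V(\Gamma)$, $u\sim v$. Let $v,w\in V(\Gamma)$ be distinct, non-adjacent vertices, and let $c_1=c_{w,v}$ (the partial conjugation of the single vertex $v$ by $w$). Then there exist $t,c_2\in\mathrm{Aut}(A_\Gamma)$ such that $c_1^m=[t^m,c_2^{-1}]$ for all $m\ge 0$. In particular, $c_1^m\in\mathrm{S}\mathcal{I}A'_\Gamma(m)$ for all $m\ge 0$.
   Context: $n=|V(\Gamma)|$. For $v\in V(\Gamma)$, $\mathrm{lk}(v)$ is the set of vertices adjacent to $v$ and $\mathrm{st}(v)=\mathrm{lk}(v)\cup\{v\}$; $v\le w$ iff $\mathrm{lk}(v)\subset\mathrm{st}(w)$; $v\sim w$ iff $v\le w$ and $w\le v$. $A_\Gamma=\langle V(\Gamma)\mid [u,v]=1 \text{ whenever } u,v \text{ adjacent}\rangle$. Under (B1), $\Gamma-\mathrm{st}(w)$ is totally disconnected, and $c_{w,v}$ denotes the automorphism $v\mapsto w^{-1}vw$ fixing all other vertices. Commutator convention: $[a,b]=a^{-1}b^{-1}ab$. Transvection: for distinct $v,w$ with $v\le w$, $t_{vw}$ maps $v\mapsto vw$, fixing other vertices; partial conjugation $c_{v,Y}$ ($Y$ a component of $\Gamma-\mathrm{st}(v)$) maps $x\mapsto v^{-1}xv$ for $x\in Y$, fixing others. $\mathrm{SAut}^0(A_\Gamma)$ is generated by transvections and partial conjugations; $\mathrm{S}\mathcal{I}A_\Gamma(m)$ is the kernel of $\mathrm{SAut}^0(A_\Gamma)\to\mathrm{SL}(n,\mathbb{Z})\to\mathrm{SL}(n,\mathbb{Z}/m\mathbb{Z})$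 (action on $H_1(A_\Gamma;\mathbb Z)=\mathbb Z^n$, then reduction mod $m$), and $\mathrm{S}\mathcal{I}A'_\Gamma(m)$ is its commutator subgroup. *)

theory Defs
  imports "HOL-Algebra.Algebra"
begin

definition simplicial_graph :: "'v set \<Rightarrow> ('v \<Rightarrow> 'v \<Rightarrow> bool) \<Rightarrow> bool" where
  "simplicial_graph V E \<longleftrightarrow> finite V \<and> (\<forall>u v. E u v \<longrightarrow> u \<in> V \<and> v \<in> V)
     \<and> (\<forall>u v. E u v \<longrightarrow> E v u) \<and> (\<forall>u. \<not> E u u)"

definition lk :: "'v set \<Rightarrow> ('v \<Rightarrow> 'v \<Rightarrow> bool) \<Rightarrow> 'v \<Rightarrow> 'v set" where
  "lk V E v = {u \<in> V. E v u}"

definition st :: "'v set \<Rightarrow> ('v \<Rightarrow> 'v \<Rightarrow> bool) \<Rightarrow> 'v \<Rightarrow> 'v set" where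
  "st V E v = insert v (lk V E v)"

definition vle :: "'v set \<Rightarrow> ('v \<Rightarrow> 'v \<Rightarrow> bool) \<Rightarrow> 'v \<Rightarrow> 'v \<Rightarrow> bool" where
  "vle V E v w \<longleftrightarrow> lk V E v \<subseteq> st V E w"

definition vequiv :: "'v set \<Rightarrow> ('v \<Rightarrow> 'v \<Rightarrow> bool) \<Rightarrow> 'v \<Rightarrow> 'v \<Rightarrow> bool" where
  "vequiv V E v w \<longleftrightarrow> vle V E v w \<and> vle V E w v"

definition B1 :: "'v set \<Rightarrow> ('v \<Rightarrow> 'v \<Rightarrow> bool) \<Rightarrow> bool" where
  "B1 V E \<longleftrightarrow> (\<forall>u\<in>V. \<forall>v\<in>V. \<not> E u v \<longrightarrow> vequiv V E u v)"

definition components :: "'v set \<Rightarrow> ('v \<Rightarrow> 'v \<Rightarrow> bool) \<Rightarrow> 'v set set" where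
  "components S E = {{y \<in> S. (\<lambda>a b. a \<in> S \<and> b \<in> S \<and> E a b)\<^sup>*\<^sup>* x y} | x. x \<in> S}"

text \<open>Words: lists of letters (vertex, sign); True = generator, False = its inverse.\<close>
type_synonym 'v word = "('v \<times> bool) list"

inductive raag_step :: "('v \<Rightarrow> 'v \<Rightarrow> bool) \<Rightarrow> 'v word \<Rightarrow> 'v word \<Rightarrow> bool"
  for E where
  cancel: "raag_step E (xs @ [(a, b), (a, \<not> b)] @ ys) (xs @ ys)"
| commute: "E a c \<Longrightarrow> raag_step E (xs @ [(a, b), (c, d)] @ ys) (xs @ [(c, d), (a, b)] @ ys)"

definition raag_rel :: "'v set \<Rightarrow> ('v \<Rightarrow> 'v \<Rightarrow> bool) \<Rightarrow> ('v word \<times> 'v word) set" where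
  "raag_rel V E = {(x, y). x \<in> lists (V \<times> UNIV) \<and> y \<in> lists (V \<times> UNIV)
                        \<and> equivclp (raag_step E) x y}"

definition raag_mult :: "'v set \<Rightarrow> ('v \<Rightarrow> 'v \<Rightarrow> bool) \<Rightarrow> 'v word set \<Rightarrow> 'v word set \<Rightarrow> 'v word set" where
  "raag_mult V E A B = raag_rel V E `` {(SOME x. x \<in> A) @ (SOME y. y \<in> B)}"

definition raag :: "'v set \<Rightarrow> ('v \<Rightarrow> 'v \<Rightarrow> bool) \<Rightarrow> 'v word set monoid" where
  "raag V E = \<lparr> carrier = lists (V \<times> UNIV) // raag_rel V E,
      monoid.mult = raag_mult V E,
      monoid.one = raag_rel V E `` {[]} \<rparr>"

definition word_inv :: "'v word \<Rightarrow> 'v word" where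
  "word_inv w = rev (map (\<lambda>(a, b). (a, \<not> b)) w)"

definition subst_word :: "('v \<Rightarrow> 'v word) \<Rightarrow> 'v word \<Rightarrow> 'v word" where
  "subst_word f w = concat (map (\<lambda>(a, b). if b then f a else word_inv (f a)) w)"

definition induced :: "'v set \<Rightarrow> ('v \<Rightarrow> 'v \<Rightarrow> bool) \<Rightarrow> ('v \<Rightarrow> 'v word) \<Rightarrow> ('v word set \<Rightarrow> 'v word set)" where
  "induced V E f = (\<lambda>A \<in> carrier (raag V E). raag_rel V E `` {subst_word f (SOME x. x \<in> A)})"

definition transvection :: "'v set \<Rightarrow> ('v \<Rightarrow> 'v \<Rightarrow> bool) \<Rightarrow> 'v \<Rightarrow> 'v \<Rightarrow> ('v word set \<Rightarrow> 'v word set)" where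
  "transvection V E v w = induced V E (\<lambda>x. if x = v then [(v, True), (w, True)] else [(x, True)])"

definition partial_conj :: "'v set \<Rightarrow> ('v \<Rightarrow> 'v \<Rightarrow> bool) \<Rightarrow> 'v \<Rightarrow> 'v set \<Rightarrow> ('v word set \<Rightarrow> 'v word set)" where
  "partial_conj V E v Y = induced V E
     (\<lambda>x. if x \<in> Y then [(v, False), (x, True), (v, True)] else [(x, True)])"

definition SAut0 :: "'v set \<Rightarrow> ('v \<Rightarrow> 'v \<Rightarrow> bool) \<Rightarrow> ('v word set \<Rightarrow> 'v word set) set" where
  "SAut0 V E = generate (AutoGroup (raag V E))
     ({transvection V E v w | v w. v \<in> V \<and> w \<in> V \<and> v \<noteq> w \<and> vle V E v w}
      \<union> {partial_conj V E v Y | v Y. v \<in> V \<and> Y \<in> components (V - st V E v) E})"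

definition exp_sum :: "'v \<Rightarrow> 'v word \<Rightarrow> int" where
  "exp_sum x w = int (length (filter (\<lambda>l. l = (x, True)) w))
               - int (length (filter (\<lambda>l. l = (x, False)) w))"

text \<open>Matrix entry (x,u) of the action of phi on H_1(A_Gamma;Z) = Z^V:
the x-coordinate of the image of the generator u.\<close>
definition hom_matrix :: "'v set \<Rightarrow> ('v \<Rightarrow> 'v \<Rightarrow> bool) \<Rightarrow> ('v word set \<Rightarrow> 'v word set) \<Rightarrow> 'v \<Rightarrow> 'v \<Rightarrow> int" where
  "hom_matrix V E \<phi> x u = exp_sum x (SOME w. w \<in> \<phi> (raag_rel V E `` {[(u, True)]}))"

text \<open>SIA_Gamma(m): kernel of SAut^0 -> SL(n,Z) -> SL(n,Z/mZ).
For m = 0 the reduction is the identity of Z.\<close>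
definition SIA :: "'v set \<Rightarrow> ('v \<Rightarrow> 'v \<Rightarrow> bool) \<Rightarrow> nat \<Rightarrow> ('v word set \<Rightarrow> 'v word set) set" where
  "SIA V E m = {\<phi> \<in> SAut0 V E. \<forall>x\<in>V. \<forall>u\<in>V.
       hom_matrix V E \<phi> x u mod int m = (if x = u then 1 else 0) mod int m}"

definition SIA' :: "'v set \<Rightarrow> ('v \<Rightarrow> 'v \<Rightarrow> bool) \<Rightarrow> nat \<Rightarrow> ('v word set \<Rightarrow> 'v word set) set" where
  "SIA' V E m = derived (AutoGroup (raag V E)) (SIA V E m)"

definition cwv :: "'v set \<Rightarrow> ('v \<Rightarrow> 'v \<Rightarrow> bool) \<Rightarrow> 'v \<Rightarrow> 'v \<Rightarrow> ('v word set \<Rightarrow> 'v word set)" where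
  "cwv V E w v = partial_conj V E w {v}"

end

theory Submission
  imports Defs
begin

(* Under (B1) the non-adjacent vertices v and w have the same link, so the transvection
   T: v |-> v w and the partial conjugations c = c_{v,w}: w |-> v^-1 w v and c1 = c_{w,v}:
   v |-> w^-1 v w are automorphisms of A_Gamma, each induced by a substitution of words that
   respects the commuting relations. All three fix every generator other than v and w, and
   evaluating on v and w gives c1^m c T^m = T^m c, i.e. c1^m = T^m c T^-m c^-1. On
   H_1 = Z^n the map T^m adds m times w to v, so it is trivial mod m, and c acts trivially;
   hence c1^m is a commutator of two elements of SIA(m). *)

lemma equivclp_map:
  assumes step: "\<And>x y. r x y \<Longrightarrow> equivclp s (f x) (f y)" and "equivclp r x y"
  shows "equivclp s (f x) (f y)"
  using assms(2)
proof (induction rule: equivclp_induct)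
  case (step y z)
  then show ?case using assms(1) equivclp_trans equivclp_sym by metis
qed simp

lemma equivclp_invariant:
  assumes "\<And>x y. r x y \<Longrightarrow> f x = f y" and "equivclp r x y"
  shows "f x = f y"
  using assms(2) by (induction rule: equivclp_induct) (auto dest: assms(1))

abbreviation word_eq :: "('v \<Rightarrow> 'v \<Rightarrow> bool) \<Rightarrow> 'v word \<Rightarrow> 'v word \<Rightarrow> bool" where
  "word_eq E \<equiv> equivclp (raag_step E)"

lemma raag_step_append_cong: "raag_step E x y \<Longrightarrow> raag_step E (a @ x @ b) (a @ y @ b)"
proof (induction rule: raag_step.induct)
  case (cancel xs a' b' ys)
  show ?case using raag_step.cancel[where xs="a @ xs" and ys="ys @ b"] by simp
next
  case (commute a' c xs b' d ys)
  show ?case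
    using raag_step.commute[where E=E and a=a' and c=c and xs="a @ xs" and ys="ys @ b", OF commute]
    by simp
qed

lemma word_eq_append_cong: "word_eq E x y \<Longrightarrow> word_eq E (a @ x @ b) (a @ y @ b)"
  by (rule equivclp_map[where f="\<lambda>x. a @ x @ b"]) (auto intro: raag_step_append_cong)

lemma word_eq_append:
  assumes "word_eq E x y" "word_eq E x' y'"
  shows "word_eq E (x @ x') (y @ y')"
proof -
  have "word_eq E (x @ x') (y @ x')" using word_eq_append_cong[OF assms(1), of "[]" x'] by simp
  also have "word_eq E (y @ x') (y @ y')" using word_eq_append_cong[OF assms(2), of y "[]"] by simp
  finally show ?thesis .
qed

lemma word_eq_cancel: "word_eq E (xs @ (a, b) # (a, \<not> b) # ys) (xs @ ys)"
  using raag_step.cancel[of E xs a b ys] by auto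

lemma word_eq_cancel_twice: "word_eq E ((a, b) # (a, \<not> b) # x @ [(c, d), (c, \<not> d)]) x"
proof -
  have "word_eq E ((a, b) # (a, \<not> b) # x @ [(c, d), (c, \<not> d)]) (x @ [(c, d), (c, \<not> d)])"
    using word_eq_cancel[of E "[]"] by simp
  also have "word_eq E \<dots> x"
    using word_eq_cancel[of E x c d "[]"] by simp
  finally show ?thesis by simp
qed

lemma word_eq_commute_letter:
  assumes "\<forall>(a, b) \<in> set u. E a c"
  shows "word_eq E (u @ [(c, d)]) ((c, d) # u)"
  using assms
proof (induction u)
  case (Cons l u)
  obtain a b where l: "l = (a, b)" by fastforce
  have "word_eq E ([(a, b)] @ (u @ [(c, d)]) @ []) ([(a, b)] @ ((c, d) # u) @ [])"
    using Cons by (intro word_eq_append_cong) auto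
  moreover have "word_eq E ([] @ [(a, b), (c, d)] @ u) ([] @ [(c, d), (a, b)] @ u)"
    using Cons.prems l by (intro r_into_equivclp raag_step.commute) auto
  ultimately show ?case using l equivclp_trans by fastforce
qed simp

lemma word_inv_Nil [simp]: "word_inv [] = []"
  by (simp add: word_inv_def)

lemma word_inv_Cons [simp]: "word_inv ((a, b) # x) = word_inv x @ [(a, \<not> b)]"
  by (simp add: word_inv_def)

lemma word_inv_append [simp]: "word_inv (x @ y) = word_inv y @ word_inv x"
  by (simp add: word_inv_def)

lemma word_inv_word_inv [simp]: "word_inv (word_inv x) = x"
  by (induction x) (auto simp: word_inv_def)

lemma word_inv_in_lists: "x \<in> lists (V \<times> UNIV) \<Longrightarrow> word_inv x \<in> lists (V \<times> UNIV)"
  by (auto simp: word_inv_def)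

lemma word_eq_right_inverse: "word_eq E (x @ word_inv x) []"
proof (induction x)
  case (Cons l x)
  obtain a b where l: "l = (a, b)" by fastforce
  have "word_eq E ([l] @ (x @ word_inv x) @ [(a, \<not> b)]) ([l] @ [] @ [(a, \<not> b)])"
    using Cons by (rule word_eq_append_cong)
  moreover have "word_eq E ([] @ (a, b) # (a, \<not> b) # []) ([] @ [])"
    by (rule word_eq_cancel)
  ultimately show ?case using l equivclp_trans by fastforce
qed simp

lemma word_eq_left_inverse: "word_eq E (word_inv x @ x) []"
  using word_eq_right_inverse[of E "word_inv x"] by simp

lemma raag_step_word_inv:
  assumes "symp E" and "raag_step E x y"
  shows "raag_step E (word_inv x) (word_inv y)"
  using assms(2)
proof (induction rule: raag_step.induct)
  case (cancel xs a b ys)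
  show ?case using raag_step.cancel[of E "word_inv ys" a b "word_inv xs"] by simp
next
  case (commute a c xs b d ys)
  show ?case
    using raag_step.commute[where E=E and xs="word_inv ys" and b="\<not> d" and d="\<not> b"
        and ys="word_inv xs", OF sympD[OF assms(1) commute]]
    by simp
qed

lemma word_eq_word_inv: "symp E \<Longrightarrow> word_eq E x y \<Longrightarrow> word_eq E (word_inv x) (word_inv y)"
  by (rule equivclp_map[where f=word_inv]) (auto intro: raag_step_word_inv)

lemma word_eq_commute_word_inv:
  assumes "word_eq E (u @ x) (x @ u)"
  shows "word_eq E (word_inv u @ x) (x @ word_inv u)"
proof -
  have "word_eq E (word_inv u @ x) (word_inv u @ (x @ u) @ word_inv u)"
    using word_eq_append_cong[OF equivclp_sym[OF word_eq_right_inverse], where a="word_inv u @ x" and b="[]"]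
    by simp
  also have "word_eq E \<dots> (word_inv u @ (u @ x) @ word_inv u)"
    by (intro word_eq_append_cong equivclp_sym[OF assms])
  also have "word_eq E \<dots> (x @ word_inv u)"
    using word_eq_append_cong[OF word_eq_left_inverse, where a="[]" and b="x @ word_inv u"] by simp
  finally show ?thesis .
qed

definition subst_letter :: "('v \<Rightarrow> 'v word) \<Rightarrow> 'v \<times> bool \<Rightarrow> 'v word" where
  "subst_letter f = (\<lambda>(a, b). if b then f a else word_inv (f a))"

lemma subst_letter_simps [simp]:
  "subst_letter f (a, True) = f a" "subst_letter f (a, False) = word_inv (f a)"
  by (simp_all add: subst_letter_def)

lemma subst_word_Nil [simp]: "subst_word f [] = []"
  by (simp add: subst_word_def)

lemma subst_word_Cons [simp]: "subst_word f (l # x) = subst_letter f l @ subst_word f x"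
  by (simp add: subst_word_def subst_letter_def)

lemma subst_word_append [simp]: "subst_word f (x @ y) = subst_word f x @ subst_word f y"
  by (simp add: subst_word_def)

lemma subst_word_word_inv: "subst_word f (word_inv x) = word_inv (subst_word f x)"
  by (induction x) (auto simp: subst_letter_def)

lemma subst_word_subst_word:
  "subst_word g (subst_word f x) = subst_word (\<lambda>a. subst_word g (f a)) x"
  by (induction x) (auto simp: subst_letter_def subst_word_word_inv)

lemma subst_word_in_lists:
  "(\<forall>a\<in>V. f a \<in> lists (V \<times> UNIV)) \<Longrightarrow> x \<in> lists (V \<times> UNIV) \<Longrightarrow>
     subst_word f x \<in> lists (V \<times> UNIV)"
proof (induction x)
  case (Cons l x)
  then show ?case by (cases l) (auto simp: subst_letter_def word_inv_in_lists)
qed simp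

lemma raag_step_subst_word:
  assumes "symp E" and comm: "\<And>a c. E a c \<Longrightarrow> word_eq E (f a @ f c) (f c @ f a)"
    and "raag_step E x y"
  shows "word_eq E (subst_word f x) (subst_word f y)"
  using assms(3)
proof (induction rule: raag_step.induct)
  case (cancel xs a b ys)
  have "word_eq E (subst_letter f (a, b) @ subst_letter f (a, \<not> b)) []"
    by (cases b) (simp_all add: word_eq_right_inverse word_eq_left_inverse)
  from word_eq_append_cong[OF this] show ?case by simp
next
  case (commute a c xs b d ys)
  have ac: "word_eq E (f a @ f c) (f c @ f a)" and ca: "word_eq E (f c @ f a) (f a @ f c)"
    using comm commute sympD[OF assms(1)] by blast+
  have "word_eq E (word_inv (f a) @ f c) (f c @ word_inv (f a))"
    and "word_eq E (word_inv (f c) @ f a) (f a @ word_inv (f c))"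
    and "word_eq E (word_inv (f a) @ word_inv (f c)) (word_inv (f c) @ word_inv (f a))"
    using word_eq_commute_word_inv[OF ac] word_eq_commute_word_inv[OF ca]
      word_eq_word_inv[OF assms(1) ca] by simp_all
  then have "word_eq E (subst_letter f (a, b) @ subst_letter f (c, d))
                       (subst_letter f (c, d) @ subst_letter f (a, b))"
    using ac equivclp_sym by (cases b; cases d) fastforce+
  from word_eq_append_cong[OF this] show ?case by simp
qed

lemma word_eq_subst_word:
  assumes "symp E" and "\<And>a c. E a c \<Longrightarrow> word_eq E (f a @ f c) (f c @ f a)"
  shows "word_eq E x y \<Longrightarrow> word_eq E (subst_word f x) (subst_word f y)"
  by (rule equivclp_map[where f="subst_word f"]) (use raag_step_subst_word[OF assms] in auto)

lemma exp_sum_Nil [simp]: "exp_sum c [] = 0"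
  by (simp add: exp_sum_def)

lemma exp_sum_Cons [simp]:
  "exp_sum c ((a, b) # y) = (if a = c then (if b then 1 else -1) else 0) + exp_sum c y"
  by (auto simp: exp_sum_def)

lemma exp_sum_append [simp]: "exp_sum c (x @ y) = exp_sum c x + exp_sum c y"
  by (simp add: exp_sum_def)

lemma exp_sum_replicate: "exp_sum c (replicate m (a, True)) = (if a = c then int m else 0)"
  by (induction m) auto

lemma exp_sum_word_eq: "word_eq E x y \<Longrightarrow> exp_sum c x = exp_sum c y"
  by (rule equivclp_invariant[where f="exp_sum c"]) (auto elim: raag_step.cases)

definition single_subst :: "'v \<Rightarrow> 'v word \<Rightarrow> 'v \<Rightarrow> 'v word" where
  "single_subst p u = (\<lambda>x. if x = p then u else [(x, True)])"

lemma transvection_eq_induced: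
  "transvection V E p q = induced V E (single_subst p [(p, True), (q, True)])"
  by (simp add: transvection_def single_subst_def)

lemma partial_conj_singleton_eq_induced:
  "partial_conj V E q {p} = induced V E (single_subst p [(q, False), (p, True), (q, True)])"
  unfolding partial_conj_def single_subst_def by (rule arg_cong[where f="induced V E"]) auto

lemma carrier_AutoGroup: "carrier (AutoGroup G) = auto G"
  by (simp add: AutoGroup_def BijGroup_def)

lemma AutoGroup_mult_apply:
  assumes "\<phi> \<in> carrier (AutoGroup G)" "\<psi> \<in> carrier (AutoGroup G)" "x \<in> carrier G"
  shows "(\<phi> \<otimes>\<^bsub>AutoGroup G\<^esub> \<psi>) x = \<phi> (\<psi> x)"
  using assms by (simp add: AutoGroup_def BijGroup_def auto_def compose_def)

lemma (in group) AutoGroup_group_hom: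
  "\<phi> \<in> carrier (AutoGroup G) \<Longrightarrow> group_hom G G \<phi>"
  by (simp add: carrier_AutoGroup auto_def group_hom_def group_hom_axioms_def is_group)

lemma (in group) AutoGroup_pow_apply_Suc:
  assumes "\<phi> \<in> carrier (AutoGroup G)" "x \<in> carrier G"
  shows "(\<phi> [^]\<^bsub>AutoGroup G\<^esub> Suc m) x = (\<phi> [^]\<^bsub>AutoGroup G\<^esub> m) (\<phi> x)"
proof -
  interpret Aut: group "AutoGroup G" by (rule AutoGroup)
  show ?thesis
    using AutoGroup_mult_apply[OF Aut.nat_pow_closed[OF assms(1)] assms(1,2)] by (simp add: assms)
qed

lemma (in group) AutoGroup_pow_fixed:
  assumes "\<phi> \<in> carrier (AutoGroup G)" "x \<in> carrier G" "\<phi> x = x"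
  shows "(\<phi> [^]\<^bsub>AutoGroup G\<^esub> (m::nat)) x = x"
proof (induction m)
  case 0 then show ?case using assms(2) by (simp add: AutoGroup_def BijGroup_def)
next
  case (Suc m) then show ?case using AutoGroup_pow_apply_Suc assms by simp
qed

lemma (in group) AutoGroup_pow_right_mult:
  assumes "\<phi> \<in> carrier (AutoGroup G)" "x \<in> carrier G" "g \<in> carrier G"
    and "\<phi> g = g" "\<phi> x = x \<otimes> g"
  shows "(\<phi> [^]\<^bsub>AutoGroup G\<^esub> (m::nat)) x = x \<otimes> g [^] m"
proof (induction m)
  case 0 then show ?case using assms(2) by (simp add: AutoGroup_def BijGroup_def)
next
  case (Suc m)
  interpret h: group_hom G G "\<phi> [^]\<^bsub>AutoGroup G\<^esub> m"
    using AutoGroup_group_hom monoid.nat_pow_closed[OF group.is_monoid[OF AutoGroup] assms(1)]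
    by blast
  show ?case
    using AutoGroup_pow_apply_Suc[OF assms(1,2)] AutoGroup_pow_fixed[OF assms(1,3,4)] Suc assms
    by (simp add: m_assoc nat_pow_Suc2)
qed

lemma (in group) AutoGroup_pow_conj:
  assumes "\<phi> \<in> carrier (AutoGroup G)" "x \<in> carrier G" "g \<in> carrier G"
    and "\<phi> g = g" "\<phi> x = inv g \<otimes> x \<otimes> g"
  shows "(\<phi> [^]\<^bsub>AutoGroup G\<^esub> (m::nat)) x = inv (g [^] m) \<otimes> x \<otimes> g [^] m"
proof (induction m)
  case 0 then show ?case using assms(2) by (simp add: AutoGroup_def BijGroup_def)
next
  case (Suc m)
  interpret h: group_hom G G "\<phi> [^]\<^bsub>AutoGroup G\<^esub> m"
    using AutoGroup_group_hom monoid.nat_pow_closed[OF group.is_monoid[OF AutoGroup] assms(1)]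
    by blast
  show ?case
    using AutoGroup_pow_apply_Suc[OF assms(1,2)] AutoGroup_pow_fixed[OF assms(1,3,4)] Suc assms
    by (simp add: m_assoc nat_pow_Suc2 inv_mult_group)
qed

lemma (in group) mult_inv_cancel_left [simp]:
  "x \<in> carrier G \<Longrightarrow> y \<in> carrier G \<Longrightarrow> x \<otimes> (inv x \<otimes> y) = y"
  by (simp add: m_assoc[symmetric])

lemma (in group) inv_mult_cancel_left [simp]:
  "x \<in> carrier G \<Longrightarrow> y \<in> carrier G \<Longrightarrow> inv x \<otimes> (x \<otimes> y) = y"
  by (simp add: m_assoc[symmetric])

lemma (in group) conj_nat_pow:
  assumes "g \<in> carrier G" "h \<in> carrier G"
  shows "(inv g \<otimes> h \<otimes> g) [^] (m::nat) = inv g \<otimes> h [^] m \<otimes> g"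
  by (induction m) (simp_all add: assms m_assoc)

lemma (in group) eq_commutator_if_mult_eq:
  assumes "a \<in> carrier G" "b \<in> carrier G" "c \<in> carrier G" "a \<otimes> b \<otimes> c = c \<otimes> b"
  shows "a = c \<otimes> b \<otimes> inv c \<otimes> inv b"
proof -
  have "a = a \<otimes> b \<otimes> c \<otimes> inv c \<otimes> inv b" using assms(1-3) by (simp add: m_assoc)
  then show ?thesis using assms(4) by simp
qed

lemma (in group) conj_transvection_relation:
  fixes m :: nat
  assumes x: "x \<in> carrier G" and y: "y \<in> carrier G"
    and "group_hom G G C" "group_hom G G c" "group_hom G G T"
    and Cx: "C x = inv (y [^] m) \<otimes> x \<otimes> y [^] m" and Cy: "C y = y"
    and cx: "c x = x" and cy: "c y = inv x \<otimes> y \<otimes> x"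
    and Tx: "T x = x \<otimes> y [^] m" and Ty: "T y = y"
  shows "C (c (T x)) = T (c x) \<and> C (c (T y)) = T (c y)"
proof -
  interpret C: group_hom G G C by fact
  interpret c: group_hom G G c by fact
  interpret T: group_hom G G T by fact
  define z where "z = y [^] m"
  have z: "z \<in> carrier G" using y by (simp add: z_def)
  have Cz: "C z = z" and Tz: "T z = z"
    using Cy Ty y by (simp_all add: z_def C.hom_nat_pow T.hom_nat_pow)
  have cz: "c z = inv x \<otimes> z \<otimes> x"
    using cy x y by (simp add: z_def c.hom_nat_pow conj_nat_pow)
  have zy: "z \<otimes> (y \<otimes> u) = y \<otimes> (z \<otimes> u)" if "u \<in> carrier G" for u
    using y that nat_pow_Suc2[OF y, of m] by (simp add: z_def m_assoc[symmetric])
  have "C (c (T x)) = T (c x)"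
    using Cx Tx cx cz Cz x z by (simp add: z_def[symmetric] m_assoc)
  moreover have "C (c (T y)) = T (c y)"
    using Cx Cy Ty Tx Tz cy x y z zy by (simp add: z_def[symmetric] m_assoc inv_mult_group)
  ultimately show ?thesis ..
qed

locale raag_graph =
  fixes V :: "'v set" and E :: "'v \<Rightarrow> 'v \<Rightarrow> bool"
  assumes simplicial: "simplicial_graph V E"
begin

abbreviation "words \<equiv> lists (V \<times> (UNIV :: bool set))"
abbreviation "G \<equiv> raag V E"
abbreviation "Aut \<equiv> AutoGroup G"

definition word_class :: "'v word \<Rightarrow> 'v word set" where
  "word_class x = raag_rel V E `` {x}"

definition vertex_gen :: "'v \<Rightarrow> 'v word set" where
  "vertex_gen a = word_class [(a, True)]"

lemma symp_E: "symp E"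
  using simplicial by (auto simp: simplicial_graph_def intro: sympI)

lemma E_in_V: "E a c \<Longrightarrow> a \<in> V \<and> c \<in> V"
  using simplicial by (auto simp: simplicial_graph_def)

lemma E_irrefl: "\<not> E a a"
  using simplicial by (auto simp: simplicial_graph_def)

lemma equiv_raag_rel: "equiv words (raag_rel V E)"
proof (rule equivI)
  show "refl_on words (raag_rel V E)" unfolding refl_on_def raag_rel_def by auto
  show "sym (raag_rel V E)" unfolding sym_def raag_rel_def by (auto intro: equivclp_sym)
  show "trans (raag_rel V E)" unfolding trans_def raag_rel_def by (blast intro: equivclp_trans)
  show "raag_rel V E \<subseteq> words \<times> words" unfolding raag_rel_def by auto
qed

lemma mem_word_class_iff: "y \<in> word_class x \<longleftrightarrow> x \<in> words \<and> y \<in> words \<and> word_eq E x y"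
  by (auto simp: word_class_def raag_rel_def)

lemma word_class_eq: "x \<in> words \<Longrightarrow> y \<in> words \<Longrightarrow> word_eq E x y \<Longrightarrow> word_class x = word_class y"
  unfolding word_class_def by (rule equiv_class_eq[OF equiv_raag_rel]) (simp add: raag_rel_def)

lemma carrier_raag: "carrier G = word_class ` words"
  by (auto simp: raag_def quotient_def word_class_def)

lemma word_class_in_carrier: "x \<in> words \<Longrightarrow> word_class x \<in> carrier G"
  by (simp add: carrier_raag)

lemma carrier_raagE:
  assumes "g \<in> carrier G"
  obtains x where "x \<in> words" "g = word_class x"
  using assms unfolding carrier_raag by blast

lemma some_in_word_class:
  assumes "x \<in> words"
  shows "(SOME y. y \<in> word_class x) \<in> words \<and> word_eq E x (SOME y. y \<in> word_class x)"
proof -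
  have "x \<in> word_class x" using assms by (simp add: mem_word_class_iff)
  then have "(SOME y. y \<in> word_class x) \<in> word_class x" by (rule someI)
  from mem_word_class_iff[THEN iffD1, OF this] show ?thesis by blast
qed

(* raag_mult multiplies arbitrarily chosen representatives; word_eq_append makes the choice
   irrelevant. *)
lemma word_class_mult:
  assumes "x \<in> words" "y \<in> words"
  shows "word_class x \<otimes>\<^bsub>G\<^esub> word_class y = word_class (x @ y)"
proof -
  define x' where "x' = (SOME z. z \<in> word_class x)"
  define y' where "y' = (SOME z. z \<in> word_class y)"
  have x': "x' \<in> words" "word_eq E x x'"
    using some_in_word_class[OF assms(1)] by (auto simp: x'_def)
  have y': "y' \<in> words" "word_eq E y y'"
    using some_in_word_class[OF assms(2)] by (auto simp: y'_def)
  have "word_class x \<otimes>\<^bsub>G\<^esub> word_class y = word_class (x' @ y')"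
    by (simp add: raag_def raag_mult_def x'_def y'_def word_class_def)
  also have "\<dots> = word_class (x @ y)"
    using x' y' assms by (intro word_class_eq) (auto intro: equivclp_sym word_eq_append)
  finally show ?thesis .
qed

lemma one_raag: "\<one>\<^bsub>G\<^esub> = word_class []"
  by (simp add: raag_def word_class_def)

lemma word_class_word_inv_mult:
  assumes "x \<in> words"
  shows "word_class (word_inv x) \<otimes>\<^bsub>G\<^esub> word_class x = \<one>\<^bsub>G\<^esub>"
proof -
  have "word_class (word_inv x) \<otimes>\<^bsub>G\<^esub> word_class x = word_class (word_inv x @ x)"
    using assms by (simp add: word_class_mult word_inv_in_lists)
  also have "\<dots> = word_class []"
    using assms by (intro word_class_eq word_eq_left_inverse) (simp_all add: word_inv_in_lists)
  finally show ?thesis by (simp add: one_raag)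
qed

lemma group_raag: "group G"
proof (rule groupI)
  fix g h assume "g \<in> carrier G" "h \<in> carrier G"
  then obtain x y where "x \<in> words" "y \<in> words" "g = word_class x" "h = word_class y"
    by (metis carrier_raagE)
  then show "g \<otimes>\<^bsub>G\<^esub> h \<in> carrier G"
    by (simp add: word_class_mult word_class_in_carrier)
next
  fix g h k assume "g \<in> carrier G" "h \<in> carrier G" "k \<in> carrier G"
  then obtain x y z where "x \<in> words" "y \<in> words" "z \<in> words"
    and "g = word_class x" "h = word_class y" "k = word_class z"
    by (metis carrier_raagE)
  then show "g \<otimes>\<^bsub>G\<^esub> h \<otimes>\<^bsub>G\<^esub> k = g \<otimes>\<^bsub>G\<^esub> (h \<otimes>\<^bsub>G\<^esub> k)"
    by (simp add: word_class_mult)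
next
  fix g assume "g \<in> carrier G"
  then obtain x where x: "x \<in> words" "g = word_class x" by (metis carrier_raagE)
  then show "\<one>\<^bsub>G\<^esub> \<otimes>\<^bsub>G\<^esub> g = g"
    using word_class_mult[of "[]" x] by (simp add: one_raag)
  show "\<exists>h\<in>carrier G. h \<otimes>\<^bsub>G\<^esub> g = \<one>\<^bsub>G\<^esub>"
    using x word_class_word_inv_mult word_class_in_carrier word_inv_in_lists by blast
qed (simp add: one_raag word_class_in_carrier)

sublocale raag: group G
  by (rule group_raag)

lemma group_Aut: "group Aut"
  by (rule raag.AutoGroup)

lemma inv_word_class: "x \<in> words \<Longrightarrow> inv\<^bsub>G\<^esub> (word_class x) = word_class (word_inv x)"
  by (intro raag.inv_equality word_class_word_inv_mult word_class_in_carrier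
      word_inv_in_lists)

lemma vertex_gen_in_carrier: "a \<in> V \<Longrightarrow> vertex_gen a \<in> carrier G"
  by (simp add: vertex_gen_def word_class_in_carrier)

lemma word_class_Cons:
  assumes "a \<in> V" "x \<in> words"
  shows "word_class ((a, True) # x) = vertex_gen a \<otimes>\<^bsub>G\<^esub> word_class x"
    and "word_class ((a, False) # x) = inv\<^bsub>G\<^esub> vertex_gen a \<otimes>\<^bsub>G\<^esub> word_class x"
  using word_class_mult[of "[(a, _)]" x] inv_word_class[of "[(a, True)]"] assms
  by (simp_all add: vertex_gen_def)

lemma word_class_replicate:
  "a \<in> V \<Longrightarrow> word_class (replicate m (a, True)) = vertex_gen a [^]\<^bsub>G\<^esub> m"
proof (induction m)
  case (Suc m)
  have "replicate m (a, True) \<in> words" using Suc.prems by auto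
  then show ?case
    using Suc word_class_Cons(1) raag.nat_pow_Suc2[OF vertex_gen_in_carrier] by simp
qed (simp add: one_raag)

definition admissible_subst :: "('v \<Rightarrow> 'v word) \<Rightarrow> bool" where
  "admissible_subst f \<longleftrightarrow>
     (\<forall>a\<in>V. f a \<in> words) \<and> (\<forall>a c. E a c \<longrightarrow> word_eq E (f a @ f c) (f c @ f a))"

lemma induced_word_class:
  assumes f: "admissible_subst f" and "x \<in> words"
  shows "induced V E f (word_class x) = word_class (subst_word f x)"
proof -
  define x' where "x' = (SOME z. z \<in> word_class x)"
  have x': "x' \<in> words" "word_eq E x x'"
    using some_in_word_class[OF assms(2)] by (auto simp: x'_def)
  have fV: "\<forall>a\<in>V. f a \<in> words" and comm: "\<And>a c. E a c \<Longrightarrow> word_eq E (f a @ f c) (f c @ f a)"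
    using f by (auto simp: admissible_subst_def)
  have "induced V E f (word_class x) = word_class (subst_word f x')"
    using word_class_in_carrier[OF assms(2)] by (simp add: induced_def x'_def word_class_def)
  also have "\<dots> = word_class (subst_word f x)"
    using word_eq_subst_word[OF symp_E comm x'(2)] subst_word_in_lists[OF fV] x' assms(2)
    by (intro word_class_eq) (auto intro: equivclp_sym)
  finally show ?thesis .
qed

lemma induced_vertex_gen:
  "admissible_subst f \<Longrightarrow> a \<in> V \<Longrightarrow> induced V E f (vertex_gen a) = word_class (f a)"
  using induced_word_class[of f "[(a, True)]"] by (simp add: vertex_gen_def)

lemma induced_hom:
  assumes f: "admissible_subst f"
  shows "induced V E f \<in> hom G G"
proof (rule homI)
  have fV: "\<forall>a\<in>V. f a \<in> words" using f by (simp add: admissible_subst_def)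
  fix g assume "g \<in> carrier G"
  then obtain x where "x \<in> words" "g = word_class x" by (rule carrier_raagE)
  then show "induced V E f g \<in> carrier G"
    by (simp add: induced_word_class[OF f] word_class_in_carrier subst_word_in_lists[OF fV])
next
  have fV: "\<forall>a\<in>V. f a \<in> words" using f by (simp add: admissible_subst_def)
  fix g h assume "g \<in> carrier G" "h \<in> carrier G"
  then obtain x y where "x \<in> words" "y \<in> words" "g = word_class x" "h = word_class y"
    by (metis carrier_raagE)
  then show "induced V E f (g \<otimes>\<^bsub>G\<^esub> h) = induced V E f g \<otimes>\<^bsub>G\<^esub> induced V E f h"
    by (simp add: word_class_mult induced_word_class[OF f] subst_word_in_lists[OF fV])
qed

lemma subst_word_word_eq_self:
  assumes "\<forall>a\<in>V. word_eq E (h a) [(a, True)]"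
  shows "x \<in> words \<Longrightarrow> word_eq E (subst_word h x) x"
proof (induction x)
  case (Cons l x)
  obtain a b where l: "l = (a, b)" by fastforce
  have a: "a \<in> V" using Cons.prems l by auto
  have "word_eq E (subst_letter h l) [l]"
    using assms(1) a l word_eq_word_inv[OF symp_E, of "h a" "[(a, True)]"] by (cases b) auto
  then show ?case using Cons word_eq_append[of E "subst_letter h l" "[l]"] by simp
qed simp

lemma induced_inverse:
  assumes f: "admissible_subst f" and g: "admissible_subst g"
    and gf: "\<forall>a\<in>V. word_eq E (subst_word g (f a)) [(a, True)]" and "x \<in> carrier G"
  shows "induced V E g (induced V E f x) = x"
proof -
  have fV: "\<forall>a\<in>V. f a \<in> words" and gV: "\<forall>a\<in>V. g a \<in> words"
    using f g by (auto simp: admissible_subst_def)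
  obtain w where w: "w \<in> words" "x = word_class w" using assms(4) by (rule carrier_raagE)
  have "induced V E g (induced V E f x) = word_class (subst_word (\<lambda>a. subst_word g (f a)) w)"
    using w by (simp add: induced_word_class f g subst_word_in_lists[OF fV] subst_word_subst_word)
  also have "\<dots> = word_class w"
    using w subst_word_word_eq_self[OF gf w(1)] subst_word_in_lists[OF fV] subst_word_in_lists[OF gV]
    by (intro word_class_eq) (auto simp: subst_word_subst_word[symmetric])
  finally show ?thesis using w(2) by simp
qed

lemma induced_in_auto:
  assumes f: "admissible_subst f" and g: "admissible_subst g"
    and gf: "\<forall>a\<in>V. word_eq E (subst_word g (f a)) [(a, True)]"
    and fg: "\<forall>a\<in>V. word_eq E (subst_word f (g a)) [(a, True)]"
  shows "induced V E f \<in> carrier Aut"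
proof -
  have "bij_betw (induced V E f) (carrier G) (carrier G)"
    using induced_inverse[OF f g gf] induced_inverse[OF g f fg] induced_hom[OF f] induced_hom[OF g]
    by (intro bij_betw_byWitness[where f'="induced V E g"]) (auto simp: hom_def)
  then show ?thesis
    using induced_hom[OF f] by (simp add: carrier_AutoGroup auto_def Bij_def induced_def)
qed

lemma hom_eq_on_words:
  assumes "\<phi> \<in> hom G G" "\<psi> \<in> hom G G" "\<forall>a\<in>V. \<phi> (vertex_gen a) = \<psi> (vertex_gen a)"
  shows "x \<in> words \<Longrightarrow> \<phi> (word_class x) = \<psi> (word_class x)"
proof -
  interpret \<phi>: group_hom G G \<phi>
    using assms(1) group_raag by (simp add: group_hom_def group_hom_axioms_def)
  interpret \<psi>: group_hom G G \<psi>
    using assms(2) group_raag by (simp add: group_hom_def group_hom_axioms_def)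
  show "x \<in> words \<Longrightarrow> \<phi> (word_class x) = \<psi> (word_class x)"
  proof (induction x)
    case (Cons l x)
    obtain a b where l: "l = (a, b)" by fastforce
    have a: "a \<in> V" and x: "x \<in> words" using Cons.prems l by auto
    then show ?case
      using l Cons.IH assms(3) vertex_gen_in_carrier[OF a] word_class_in_carrier[OF x]
      by (cases b) (simp_all add: word_class_Cons)
  qed (simp add: one_raag[symmetric])
qed

lemma Aut_eqI:
  assumes "\<phi> \<in> carrier Aut" "\<psi> \<in> carrier Aut" "\<forall>a\<in>V. \<phi> (vertex_gen a) = \<psi> (vertex_gen a)"
  shows "\<phi> = \<psi>"
proof (rule extensionalityI)
  show "\<phi> \<in> extensional (carrier G)" "\<psi> \<in> extensional (carrier G)"
    using assms(1,2) by (auto simp: carrier_AutoGroup auto_def Bij_def)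
  fix g assume "g \<in> carrier G"
  then obtain x where "x \<in> words" "g = word_class x" by (rule carrier_raagE)
  then show "\<phi> g = \<psi> g"
    using hom_eq_on_words assms by (simp add: carrier_AutoGroup auto_def)
qed

lemma hom_matrix_eq_exp_sum:
  assumes "\<phi> (vertex_gen u) = word_class y" "y \<in> words"
  shows "hom_matrix V E \<phi> x u = exp_sum x y"
proof -
  have "hom_matrix V E \<phi> x u = exp_sum x (SOME z. z \<in> word_class y)"
    using assms(1) by (simp add: hom_matrix_def vertex_gen_def word_class_def)
  also have "\<dots> = exp_sum x y"
    using some_in_word_class[OF assms(2)] exp_sum_word_eq by metis
  finally show ?thesis .
qed

lemma admissible_single_subst:
  assumes "p \<in> V" "u \<in> words" and comm: "\<And>c. E p c \<Longrightarrow> \<forall>(a, b) \<in> set u. E a c"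
  shows "admissible_subst (single_subst p u)"
  unfolding admissible_subst_def
proof (intro conjI ballI allI impI)
  fix a assume "a \<in> V"
  then show "single_subst p u a \<in> words" using assms by (simp add: single_subst_def)
next
  fix a c assume ac: "E a c"
  have ca: "E c a" using sympD[OF symp_E ac] .
  consider "a = p" | "c = p" | "a \<noteq> p" "c \<noteq> p" by blast
  then show "word_eq E (single_subst p u a @ single_subst p u c) (single_subst p u c @ single_subst p u a)"
  proof cases
    case 1
    then have "c \<noteq> p" using ac E_irrefl by auto
    moreover have "\<forall>(a', b) \<in> set u. E a' c" using comm ac 1 by blast
    ultimately show ?thesis using 1 word_eq_commute_letter by (simp add: single_subst_def)
  next
    case 2
    then have "a \<noteq> p" using ac E_irrefl by auto
    moreover have "\<forall>(c', b) \<in> set u. E c' a" using comm ca 2 by blast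
    ultimately show ?thesis using 2 equivclp_sym[OF word_eq_commute_letter]
      by (simp add: single_subst_def)
  next
    case 3
    then show ?thesis
      using raag_step.commute[where E=E and xs="[]" and ys="[]" and b=True and d=True, OF ac]
      by (auto simp: single_subst_def)
  qed
qed

lemma SAut0_nat_pow: "\<phi> \<in> SAut0 V E \<Longrightarrow> \<phi> [^]\<^bsub>Aut\<^esub> (m::nat) \<in> SAut0 V E"
  unfolding SAut0_def by (induction m) (auto intro: generate.one generate.eng)

context
  fixes p q assumes p: "p \<in> V" and q: "q \<in> V" and "p \<noteq> q" and lk: "lk V E p \<subseteq> lk V E q"
begin

lemma E_dominated: "E p c \<Longrightarrow> E q c"
  using lk E_in_V by (auto simp: lk_def)

lemma admissible_transvection_subst:
  "admissible_subst (single_subst p [(p, True), (q, b)])"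
  using p q by (intro admissible_single_subst) (auto intro: E_dominated)

lemma admissible_conj_subst:
  "admissible_subst (single_subst p [(q, b), (p, True), (q, b')])"
  using p q by (intro admissible_single_subst) (auto intro: E_dominated)

lemma transvection_in_Aut: "transvection V E p q \<in> carrier Aut"
  unfolding transvection_eq_induced
proof (rule induced_in_auto[OF admissible_transvection_subst admissible_transvection_subst])
  show "\<forall>a\<in>V. word_eq E (subst_word (single_subst p [(p, True), (q, False)])
                   (single_subst p [(p, True), (q, True)] a)) [(a, True)]"
    using \<open>p \<noteq> q\<close> word_eq_cancel[of E "[(p, True)]" q False "[]"]
    by (auto simp: single_subst_def)
  show "\<forall>a\<in>V. word_eq E (subst_word (single_subst p [(p, True), (q, True)])
                   (single_subst p [(p, True), (q, False)] a)) [(a, True)]"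
    using \<open>p \<noteq> q\<close> word_eq_cancel[of E "[(p, True)]" q True "[]"]
    by (auto simp: single_subst_def)
qed

lemma partial_conj_singleton_in_Aut: "partial_conj V E q {p} \<in> carrier Aut"
  unfolding partial_conj_singleton_eq_induced
proof (rule induced_in_auto[OF admissible_conj_subst admissible_conj_subst])
  show "\<forall>a\<in>V. word_eq E (subst_word (single_subst p [(q, True), (p, True), (q, False)])
                   (single_subst p [(q, False), (p, True), (q, True)] a)) [(a, True)]"
    using \<open>p \<noteq> q\<close> word_eq_cancel_twice[of E q False "[(p, True)]" q False]
    by (auto simp: single_subst_def)
  show "\<forall>a\<in>V. word_eq E (subst_word (single_subst p [(q, False), (p, True), (q, True)])
                   (single_subst p [(q, True), (p, True), (q, False)] a)) [(a, True)]"
    using \<open>p \<noteq> q\<close> word_eq_cancel_twice[of E q True "[(p, True)]" q True]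
    by (auto simp: single_subst_def)
qed

lemma transvection_vertex_gen:
  "a \<in> V \<Longrightarrow> transvection V E p q (vertex_gen a) =
     (if a = p then vertex_gen p \<otimes>\<^bsub>G\<^esub> vertex_gen q else vertex_gen a)"
proof -
  assume "a \<in> V"
  then have "transvection V E p q (vertex_gen a) = word_class (single_subst p [(p, True), (q, True)] a)"
    by (simp add: transvection_eq_induced induced_vertex_gen admissible_transvection_subst)
  then show ?thesis
    using p q word_class_Cons(1)[of p "[(q, True)]"] by (simp add: single_subst_def vertex_gen_def)
qed

lemma partial_conj_singleton_vertex_gen:
  "a \<in> V \<Longrightarrow> partial_conj V E q {p} (vertex_gen a) =
     (if a = p then inv\<^bsub>G\<^esub> vertex_gen q \<otimes>\<^bsub>G\<^esub> vertex_gen p \<otimes>\<^bsub>G\<^esub> vertex_gen q else vertex_gen a)"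
proof -
  assume "a \<in> V"
  then have "partial_conj V E q {p} (vertex_gen a)
               = word_class (single_subst p [(q, False), (p, True), (q, True)] a)"
    by (simp add: partial_conj_singleton_eq_induced induced_vertex_gen admissible_conj_subst)
  then show ?thesis
    using p q word_class_Cons[of q "[(p, True), (q, True)]"] word_class_Cons(1)[of p "[(q, True)]"]
      vertex_gen_in_carrier
    by (simp add: single_subst_def vertex_gen_def raag.m_assoc)
qed

lemma transvection_pow_vertex_gen:
  "a \<in> V \<Longrightarrow> (transvection V E p q [^]\<^bsub>Aut\<^esub> (m::nat)) (vertex_gen a) =
     (if a = p then vertex_gen p \<otimes>\<^bsub>G\<^esub> vertex_gen q [^]\<^bsub>G\<^esub> m else vertex_gen a)"
  using raag.AutoGroup_pow_right_mult[OF transvection_in_Aut, of "vertex_gen p" "vertex_gen q"]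
    raag.AutoGroup_pow_fixed[OF transvection_in_Aut, of "vertex_gen a"]
    transvection_vertex_gen vertex_gen_in_carrier p q \<open>p \<noteq> q\<close>
  by (cases "a = p") simp_all

lemma partial_conj_singleton_pow_vertex_gen:
  "a \<in> V \<Longrightarrow> (partial_conj V E q {p} [^]\<^bsub>Aut\<^esub> (m::nat)) (vertex_gen a) =
     (if a = p then inv\<^bsub>G\<^esub> (vertex_gen q [^]\<^bsub>G\<^esub> m) \<otimes>\<^bsub>G\<^esub> vertex_gen p \<otimes>\<^bsub>G\<^esub> vertex_gen q [^]\<^bsub>G\<^esub> m
      else vertex_gen a)"
  using raag.AutoGroup_pow_conj[OF partial_conj_singleton_in_Aut, of "vertex_gen p" "vertex_gen q"]
    raag.AutoGroup_pow_fixed[OF partial_conj_singleton_in_Aut, of "vertex_gen a"]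
    partial_conj_singleton_vertex_gen vertex_gen_in_carrier p q \<open>p \<noteq> q\<close>
  by (cases "a = p") simp_all

lemma transvection_in_SAut0: "transvection V E p q \<in> SAut0 V E"
proof -
  have "vle V E p q" using lk by (auto simp: vle_def st_def)
  then show ?thesis using p q \<open>p \<noteq> q\<close> unfolding SAut0_def by (blast intro: generate.incl)
qed

lemma singleton_in_components: "{p} \<in> components (V - st V E q) E"
proof -
  let ?S = "V - st V E q"
  let ?R = "\<lambda>a b. a \<in> ?S \<and> b \<in> ?S \<and> E a b"
  have "\<not> E q p" using lk E_dominated E_irrefl sympD[OF symp_E] by blast
  then have pS: "p \<in> ?S" using p \<open>p \<noteq> q\<close> by (auto simp: st_def lk_def)
  have "\<not> ?R p b" for b
    using E_dominated E_in_V by (auto simp: st_def lk_def)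
  then have "{y \<in> ?S. ?R\<^sup>*\<^sup>* p y} = {p}"
    using pS by (auto elim: converse_rtranclpE)
  then show ?thesis unfolding components_def using pS by blast
qed

lemma partial_conj_singleton_in_SAut0: "partial_conj V E q {p} \<in> SAut0 V E"
  using q singleton_in_components unfolding SAut0_def by (blast intro: generate.incl)

lemma transvection_pow_in_SIA: "transvection V E p q [^]\<^bsub>Aut\<^esub> m \<in> SIA V E m"
  unfolding SIA_def
proof (intro CollectI conjI ballI SAut0_nat_pow transvection_in_SAut0)
  fix x u assume "x \<in> V" "u \<in> V"
  have rep: "replicate m (q, True) \<in> words" using q by auto
  show "hom_matrix V E (transvection V E p q [^]\<^bsub>Aut\<^esub> m) x u mod int m
          = (if x = u then 1 else 0) mod int m"
  proof (cases "u = p")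
    case True
    then have "hom_matrix V E (transvection V E p q [^]\<^bsub>Aut\<^esub> m) x u
                 = exp_sum x ((p, True) # replicate m (q, True))"
      using transvection_pow_vertex_gen[OF p] word_class_Cons(1)[OF p rep] word_class_replicate[OF q]
        rep p by (intro hom_matrix_eq_exp_sum) simp_all
    then show ?thesis using True \<open>p \<noteq> q\<close> by (simp add: exp_sum_replicate)
  next
    case False
    then have "hom_matrix V E (transvection V E p q [^]\<^bsub>Aut\<^esub> m) x u = exp_sum x [(u, True)]"
      using transvection_pow_vertex_gen \<open>u \<in> V\<close>
      by (intro hom_matrix_eq_exp_sum) (simp_all add: vertex_gen_def)
    then show ?thesis by simp
  qed
qed

lemma partial_conj_singleton_in_SIA: "partial_conj V E q {p} \<in> SIA V E m"
  unfolding SIA_def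
proof (intro CollectI conjI ballI partial_conj_singleton_in_SAut0)
  fix x u assume "u \<in> V"
  let ?f = "single_subst p [(q, False), (p, True), (q, True)]"
  have "hom_matrix V E (partial_conj V E q {p}) x u = exp_sum x (?f u)"
    using \<open>u \<in> V\<close> p q admissible_conj_subst
    by (intro hom_matrix_eq_exp_sum)
      (simp_all add: partial_conj_singleton_eq_induced induced_vertex_gen single_subst_def)
  then show "hom_matrix V E (partial_conj V E q {p}) x u mod int m
               = (if x = u then 1 else 0) mod int m"
    by (simp add: single_subst_def)
qed

end

lemma lk_eq_if_vequiv:
  assumes "vequiv V E v w" "\<not> E v w"
  shows "lk V E v = lk V E w"
proof -
  have "\<not> E w v" using assms(2) sympD[OF symp_E] by blast
  then show ?thesis using assms by (auto simp: vequiv_def vle_def st_def lk_def)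
qed

lemma partial_conj_pow_mult_commute:
  fixes m :: nat
  assumes v: "v \<in> V" and w: "w \<in> V" and "v \<noteq> w" and lk: "lk V E v = lk V E w"
  defines "C \<equiv> partial_conj V E w {v} [^]\<^bsub>Aut\<^esub> m"
    and "T \<equiv> transvection V E v w [^]\<^bsub>Aut\<^esub> m" and "c \<equiv> partial_conj V E v {w}"
  shows "C \<otimes>\<^bsub>Aut\<^esub> c \<otimes>\<^bsub>Aut\<^esub> T = T \<otimes>\<^bsub>Aut\<^esub> c"
proof -
  interpret Aut: group Aut by (rule group_Aut)
  have "w \<noteq> v" using \<open>v \<noteq> w\<close> by simp
  have CA: "C \<in> carrier Aut" and cA: "c \<in> carrier Aut" and TA: "T \<in> carrier Aut"
    using partial_conj_singleton_in_Aut[OF v w \<open>v \<noteq> w\<close>]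
      partial_conj_singleton_in_Aut[OF w v \<open>w \<noteq> v\<close>] transvection_in_Aut[OF v w \<open>v \<noteq> w\<close>] lk
    by (simp_all add: C_def c_def T_def)
  have Cgen: "C (vertex_gen a) = (if a = v then inv\<^bsub>G\<^esub> (vertex_gen w [^]\<^bsub>G\<^esub> m)
                 \<otimes>\<^bsub>G\<^esub> vertex_gen v \<otimes>\<^bsub>G\<^esub> vertex_gen w [^]\<^bsub>G\<^esub> m else vertex_gen a)"
    and Tgen: "T (vertex_gen a) = (if a = v then vertex_gen v \<otimes>\<^bsub>G\<^esub> vertex_gen w [^]\<^bsub>G\<^esub> m
                 else vertex_gen a)"
    and cgen: "c (vertex_gen a) = (if a = w then inv\<^bsub>G\<^esub> vertex_gen v \<otimes>\<^bsub>G\<^esub> vertex_gen w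
                 \<otimes>\<^bsub>G\<^esub> vertex_gen v else vertex_gen a)"
    if "a \<in> V" for a
    using partial_conj_singleton_pow_vertex_gen[OF v w \<open>v \<noteq> w\<close> _ that]
      transvection_pow_vertex_gen[OF v w \<open>v \<noteq> w\<close> _ that]
      partial_conj_singleton_vertex_gen[OF w v \<open>w \<noteq> v\<close> _ that] lk
    by (simp_all add: C_def T_def c_def)
  have on_pair: "C (c (T (vertex_gen a))) = T (c (vertex_gen a))" if "a = v \<or> a = w" for a
    using raag.conj_transvection_relation[OF vertex_gen_in_carrier[OF v] vertex_gen_in_carrier[OF w]
        raag.AutoGroup_group_hom[OF CA] raag.AutoGroup_group_hom[OF cA] raag.AutoGroup_group_hom[OF TA]]
      Cgen Tgen cgen v w \<open>v \<noteq> w\<close> that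
    by auto
  show ?thesis
  proof (rule Aut_eqI)
    show "C \<otimes>\<^bsub>Aut\<^esub> c \<otimes>\<^bsub>Aut\<^esub> T \<in> carrier Aut" "T \<otimes>\<^bsub>Aut\<^esub> c \<in> carrier Aut"
      using CA cA TA by simp_all
    show "\<forall>a\<in>V. (C \<otimes>\<^bsub>Aut\<^esub> c \<otimes>\<^bsub>Aut\<^esub> T) (vertex_gen a) = (T \<otimes>\<^bsub>Aut\<^esub> c) (vertex_gen a)"
    proof
      fix a assume a: "a \<in> V"
      have "C (c (T (vertex_gen a))) = T (c (vertex_gen a))"
        using on_pair[of a] Cgen[OF a] Tgen[OF a] cgen[OF a] by (cases "a = v \<or> a = w") auto
      then show "(C \<otimes>\<^bsub>Aut\<^esub> c \<otimes>\<^bsub>Aut\<^esub> T) (vertex_gen a) = (T \<otimes>\<^bsub>Aut\<^esub> c) (vertex_gen a)"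
        using CA cA TA vertex_gen_in_carrier[OF a]
          group_hom.hom_closed[OF raag.AutoGroup_group_hom[OF TA]]
        by (simp add: AutoGroup_mult_apply)
    qed
  qed
qed

lemma partial_conj_pow_eq_commutator:
  fixes m :: nat
  assumes "v \<in> V" "w \<in> V" "v \<noteq> w" "lk V E v = lk V E w"
  defines "T \<equiv> transvection V E v w [^]\<^bsub>Aut\<^esub> m" and "c \<equiv> partial_conj V E v {w}"
  shows "partial_conj V E w {v} [^]\<^bsub>Aut\<^esub> m = T \<otimes>\<^bsub>Aut\<^esub> c \<otimes>\<^bsub>Aut\<^esub> inv\<^bsub>Aut\<^esub> T \<otimes>\<^bsub>Aut\<^esub> inv\<^bsub>Aut\<^esub> c"
proof (rule group.eq_commutator_if_mult_eq[OF group_Aut])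
  have "w \<noteq> v" using assms(3) by simp
  show "c \<in> carrier Aut" "T \<in> carrier Aut"
    "partial_conj V E w {v} [^]\<^bsub>Aut\<^esub> m \<in> carrier Aut"
    using partial_conj_singleton_in_Aut[OF assms(2,1) \<open>w \<noteq> v\<close>]
      partial_conj_singleton_in_Aut[OF assms(1,2,3)] transvection_in_Aut[OF assms(1,2,3)] assms(4)
      monoid.nat_pow_closed[OF raag.AutoGroup[THEN group.is_monoid]]
    by (simp_all add: T_def c_def)
qed (use partial_conj_pow_mult_commute[OF assms(1-4)] in \<open>simp add: T_def c_def\<close>)

lemma partial_conj_pow_in_SIA':
  fixes m :: nat
  assumes "v \<in> V" "w \<in> V" "v \<noteq> w" "lk V E v = lk V E w"
  shows "partial_conj V E w {v} [^]\<^bsub>Aut\<^esub> m \<in> SIA' V E m"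
proof -
  have "w \<noteq> v" using assms(3) by simp
  have "partial_conj V E w {v} [^]\<^bsub>Aut\<^esub> m \<in> derived_set Aut (SIA V E m)"
    using transvection_pow_in_SIA[OF assms(1-3)] partial_conj_singleton_in_SIA[OF assms(2,1) \<open>w \<noteq> v\<close>]
      assms(4)
    unfolding partial_conj_pow_eq_commutator[OF assms] by auto
  then show ?thesis unfolding SIA'_def derived_def by (rule generate.incl)
qed

end

theorem lemma3p6:
  fixes V :: "'v set" and E :: "'v \<Rightarrow> 'v \<Rightarrow> bool" and v w :: 'v
  assumes "simplicial_graph V E" and "B1 V E"
    and "v \<in> V" and "w \<in> V" and "v \<noteq> w" and "\<not> E v w"
  defines "Aut \<equiv> AutoGroup (raag V E)"
  defines "c1 \<equiv> cwv V E w v"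
  shows "(\<exists>t \<in> carrier Aut. \<exists>c2 \<in> carrier Aut. \<forall>m::nat.
            c1 [^]\<^bsub>Aut\<^esub> m =
              inv\<^bsub>Aut\<^esub> (t [^]\<^bsub>Aut\<^esub> m) \<otimes>\<^bsub>Aut\<^esub> inv\<^bsub>Aut\<^esub> (inv\<^bsub>Aut\<^esub> c2)
                \<otimes>\<^bsub>Aut\<^esub> (t [^]\<^bsub>Aut\<^esub> m) \<otimes>\<^bsub>Aut\<^esub> inv\<^bsub>Aut\<^esub> c2)
       \<and> (\<forall>m::nat. c1 [^]\<^bsub>Aut\<^esub> m \<in> SIA' V E m)"
proof -
  interpret raag_graph V E by (rule raag_graph.intro) fact
  interpret Aut: group Aut unfolding Aut_def by (rule group_Aut)
  have "w \<noteq> v" using assms(5) by simp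
  have lk: "lk V E v = lk V E w"
    using assms(2-4,6) by (intro lk_eq_if_vequiv) (auto simp: B1_def)
  define T c2 where "T = transvection V E v w" and "c2 = partial_conj V E v {w}"
  have T: "T \<in> carrier Aut" and c2: "c2 \<in> carrier Aut"
    using transvection_in_Aut[OF assms(3-5)] partial_conj_singleton_in_Aut[OF assms(4,3) \<open>w \<noteq> v\<close>] lk
    by (simp_all add: Aut_def T_def c2_def)
  have "c1 [^]\<^bsub>Aut\<^esub> m = T [^]\<^bsub>Aut\<^esub> m \<otimes>\<^bsub>Aut\<^esub> c2 \<otimes>\<^bsub>Aut\<^esub> inv\<^bsub>Aut\<^esub> (T [^]\<^bsub>Aut\<^esub> m) \<otimes>\<^bsub>Aut\<^esub> inv\<^bsub>Aut\<^esub> c2"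
    for m :: nat
    using partial_conj_pow_eq_commutator[OF assms(3-5) lk]
    by (simp add: c1_def cwv_def Aut_def T_def c2_def)
  (* With the convention [a,b] = a^-1 b^-1 a b this is the commutator [t^m, c2^-1] for t = T^-1. *)
  then have "c1 [^]\<^bsub>Aut\<^esub> m = inv\<^bsub>Aut\<^esub> (inv\<^bsub>Aut\<^esub> T [^]\<^bsub>Aut\<^esub> m) \<otimes>\<^bsub>Aut\<^esub> inv\<^bsub>Aut\<^esub> (inv\<^bsub>Aut\<^esub> c2)
                \<otimes>\<^bsub>Aut\<^esub> (inv\<^bsub>Aut\<^esub> T [^]\<^bsub>Aut\<^esub> m) \<otimes>\<^bsub>Aut\<^esub> inv\<^bsub>Aut\<^esub> c2" for m :: nat
    using T c2 by (simp add: Aut.nat_pow_inv)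
  moreover have "c1 [^]\<^bsub>Aut\<^esub> m \<in> SIA' V E m" for m :: nat
    using partial_conj_pow_in_SIA'[OF assms(3-5) lk] by (simp add: c1_def cwv_def Aut_def)
  ultimately show ?thesis using T c2 by blast
qed

end
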